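(* Let $m\ge 2$ be an integer and $a>0$. Let $\mathcal{H}_\infty$ be the $m$-order infinite dimensional generalized Hilbert tensor with entries $\mathcal{H}_{i_1\cdots i_m}=\frac{1}{i_1+\cdots+i_m-m+a}$, $i_1,\dots,i_m\in\{1,2,\dots\}$, and for $x\in l^1$ let $\mathcal{H}_\infty x^{m-1}$ be the infinite vector with components $$(\mathcal{H}_\infty x^{m-1})_i=\sum_{i_2,\dots,i_m=1}^\infty\frac{x_{i_2}\cdots x_{i_m}}{i+i_2+\cdots+i_m-m+a},\quad i=1,2,\dots.$$ Define $$T_\infty x=\begin{cases}\|x\|_{l^1}^{2-m}\,\mathcal{H}_\infty x^{m-1}, & x\neq\theta,\\ \theta, & x=\theta,\end{cases}$$ and, when $m$ is even, $F_\infty x=(\mathcal{H}_\infty x^{m-1})^{[\frac{1}{m-1}]}$, where $y^{[\frac1{m-1}]}=(y_1^{\frac1{m-1}},y_2^{\frac1{m-1}},\dots)$ (real $(m-1)$-th roots, $m-1$ odd) and $\theta=(0,0,\dots)$. (i) Suppose $m$ is even. If $x\in l^1$, then $F_\infty x\in l^p$ for every $m-1<p<\infty$. Moreover, $F_\infty$ is a bounded, continuous and positively homogeneous operator from $l^1$ into $l^p$ ($m-1<p<\infty$). In particular, $$\|F_\infty\|=\sup_{\|x\|_{l^1}=1}\|F_\infty x\|_{l^{2(m-1)}}\le K(a),\qquad K(a)=\begin{cases}\left(\frac{1}{a^2}+\frac{\pi^2}{6}\right)^{\frac{1}{2(m-1)}}, & 0<a<1,\\ \left(\frac{\pi^2}{6}\right)^{\frac{1}{2(m-1)}},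 & a\ge 1.\end{cases}$$ (ii) If $x\in l^1$, then $T_\infty x\in l^p$ for every $1<p<\infty$. Moreover, $T_\infty$ is a bounded, continuous and positively homogeneous operator from $l^1$ into $l^p$ ($1<p<\infty$). In particular, $$\|T_\infty\|=\sup_{\|x\|_{l^1}=1}\|T_\infty x\|_{l^2}\le C(a),\qquad C(a)=\begin{cases}\sqrt{\frac{1}{a^2}+\frac{\pi^2}{6}}, & 0<a<1,\\ \frac{\pi}{\sqrt6}, & a\ge1.\end{cases}$$
   Context: For $p\ge1$, $l^p$ is the space of real sequences $x=(x_i)_{i=1}^\infty$ with $\|x\|_{l^p}=(\sum_{i=1}^\infty|x_i|^p)^{1/p}<\infty$. For real Banach spaces $X,Y$, an operator $T:X\to Y$ is positively homogeneous if $T(tx)=tT(x)$ for all $t>0$, $x\in X$; it is bounded if there is $M>0$ with $\|Tx\|_Y\le M\|x\|_X$ for all $x\in X$. For a bounded, continuous, positively homogeneous $T$, its norm is $\|T\|=\sup\{\|Tx\|_Y:\|x\|_X=1\}$. *)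

theory Defs
  imports "HOL-Analysis.Analysis"
begin

text \<open>Real sequences are functions nat \<Rightarrow> real; index k here corresponds to index k+1 in the paper.\<close>

definition lp_mem :: "real \<Rightarrow> (nat \<Rightarrow> real) \<Rightarrow> bool" where
  "lp_mem p x \<longleftrightarrow> summable (\<lambda>i. \<bar>x i\<bar> powr p)"

definition lp_norm :: "real \<Rightarrow> (nat \<Rightarrow> real) \<Rightarrow> real" where
  "lp_norm p x = (\<Sum>i. \<bar>x i\<bar> powr p) powr (1 / p)"

text \<open>(H x^{m-1})_i, with 0-based indices: the paper's denominator
  i+i_2+...+i_m-m+a becomes i+j_1+...+j_{m-1}+a for 0-based i, j_k.\<close>
definition Hinf :: "nat \<Rightarrow> real \<Rightarrow> (nat \<Rightarrow> real) \<Rightarrow> nat \<Rightarrow> real" where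
  "Hinf m a x i = (\<Sum>\<^sub>\<infinity> j \<in> PiE {..<m-1} (\<lambda>_. UNIV).
      (\<Prod>k<m-1. x (j k)) / (real i + (\<Sum>k<m-1. real (j k)) + a))"

definition Tinf :: "nat \<Rightarrow> real \<Rightarrow> (nat \<Rightarrow> real) \<Rightarrow> nat \<Rightarrow> real" where
  "Tinf m a x = (if x = (\<lambda>_. 0) then (\<lambda>_. 0)
     else (\<lambda>i. lp_norm 1 x powr (2 - real m) * Hinf m a x i))"

definition Finf :: "nat \<Rightarrow> real \<Rightarrow> (nat \<Rightarrow> real) \<Rightarrow> nat \<Rightarrow> real" where
  "Finf m a x = (\<lambda>i. root (m - 1) (Hinf m a x i))"

definition bounded_op_l1_lp :: "real \<Rightarrow> ((nat \<Rightarrow> real) \<Rightarrow> nat \<Rightarrow> real) \<Rightarrow> bool" where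
  "bounded_op_l1_lp p T \<longleftrightarrow> (\<exists>M>0. \<forall>x. lp_mem 1 x \<longrightarrow> lp_norm p (T x) \<le> M * lp_norm 1 x)"

definition continuous_op_l1_lp :: "real \<Rightarrow> ((nat \<Rightarrow> real) \<Rightarrow> nat \<Rightarrow> real) \<Rightarrow> bool" where
  "continuous_op_l1_lp p T \<longleftrightarrow> (\<forall>x. lp_mem 1 x \<longrightarrow> (\<forall>e>0. \<exists>d>0. \<forall>y. lp_mem 1 y \<longrightarrow>
      lp_norm 1 (y - x) < d \<longrightarrow> lp_norm p (T y - T x) < e))"

definition pos_homogeneous_on_l1 :: "((nat \<Rightarrow> real) \<Rightarrow> nat \<Rightarrow> real) \<Rightarrow> bool" where
  "pos_homogeneous_on_l1 T \<longleftrightarrow> (\<forall>t>0. \<forall>x. lp_mem 1 x \<longrightarrow> T (\<lambda>i. t * x i) = (\<lambda>i. t * T x i))"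

definition Kconst :: "nat \<Rightarrow> real \<Rightarrow> real" where
  "Kconst m a = (if a < 1 then (1 / a\<^sup>2 + pi\<^sup>2 / 6) powr (1 / (2 * (real m - 1)))
                 else (pi\<^sup>2 / 6) powr (1 / (2 * (real m - 1))))"

definition Cconst :: "real \<Rightarrow> real" where
  "Cconst a = (if a < 1 then sqrt (1 / a\<^sup>2 + pi\<^sup>2 / 6) else pi / sqrt 6)"

end

theory Submission
  imports Defs
begin

text \<open>All denominators in row \<open>i\<close> of the tensor are at least \<open>i + a\<close>, and summing
  \<open>\<Prod>\<^sub>k \<bar>x (j k)\<bar>\<close> over all \<open>(m-1)\<close>-tuples \<open>j\<close> gives \<open>\<parallel>x\<parallel>\<^sub>1 ^ (m-1)\<close>; hence
  \<open>\<bar>(H x) i\<bar> \<le> \<parallel>x\<parallel>\<^sub>1 ^ (m-1) / (i + a)\<close>, and telescoping the products gives the Lipschitz bound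
  \<open>(m-1) R ^ (m-2) \<parallel>y - x\<parallel>\<^sub>1 / (i + a)\<close> on the ball of radius \<open>R\<close>. So \<open>\<bar>(T x) i\<bar>\<close> and
  \<open>\<bar>(F x) i\<bar>\<close> are at most \<open>\<parallel>x\<parallel>\<^sub>1 / (i + a) powr r\<close> with \<open>r = 1\<close> resp. \<open>r = 1/(m-1)\<close>, and such
  a sequence lies in \<open>l\<^sup>p\<close> with norm at most \<open>\<parallel>x\<parallel>\<^sub>1 \<zeta>(r p, a) powr (1/p)\<close> (Hurwitz zeta) as soon
  as \<open>r p > 1\<close>. The same weighted estimates for differences give continuity, and
  \<open>\<zeta>(2, a) \<le> \<pi>\<^sup>2/6\<close> (plus \<open>1/a\<^sup>2\<close> if \<open>a < 1\<close>) gives the constants.\<close>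

section \<open>Sequence spaces\<close>

lemma lp_mem_1_iff: "lp_mem 1 x \<longleftrightarrow> summable (\<lambda>i. \<bar>x i\<bar>)"
  by (simp add: lp_mem_def)

lemma lp_norm_1_eq: "lp_mem 1 x \<Longrightarrow> lp_norm 1 x = (\<Sum>i. \<bar>x i\<bar>)"
  by (simp add: lp_norm_def lp_mem_1_iff suminf_nonneg)

lemma lp_norm_nonneg: "0 \<le> lp_norm p x"
  by (simp add: lp_norm_def)

lemma lp_mem_1_diff:
  assumes "lp_mem 1 x" and "lp_mem 1 y"
  shows "lp_mem 1 (y - x)"
proof -
  have "summable (\<lambda>i. \<bar>y i\<bar> + \<bar>x i\<bar>)"
    using assms by (auto simp: lp_mem_1_iff intro: summable_add)
  then show ?thesis
    unfolding lp_mem_1_iff by (rule summable_comparison_test'[where N=0]) auto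
qed

lemma lp_norm_1_triangle_ineq3:
  assumes x: "lp_mem 1 x" and y: "lp_mem 1 y"
  shows "\<bar>lp_norm 1 y - lp_norm 1 x\<bar> \<le> lp_norm 1 (y - x)"
proof -
  have yx: "lp_mem 1 (y - x)"
    using x y by (rule lp_mem_1_diff)
  have sx: "summable (\<lambda>i. \<bar>x i\<bar>)" and sy: "summable (\<lambda>i. \<bar>y i\<bar>)"
    and sd: "summable (\<lambda>i. \<bar>y i - x i\<bar>)"
    using x y yx by (auto simp: lp_mem_1_iff)
  have "(\<Sum>i. \<bar>y i\<bar>) \<le> (\<Sum>i. \<bar>x i\<bar>) + (\<Sum>i. \<bar>y i - x i\<bar>)"
    unfolding suminf_add[OF sx sd] by (rule suminf_le) (auto intro: summable_add sx sd sy)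
  moreover have "(\<Sum>i. \<bar>x i\<bar>) \<le> (\<Sum>i. \<bar>y i\<bar>) + (\<Sum>i. \<bar>y i - x i\<bar>)"
    unfolding suminf_add[OF sy sd] by (rule suminf_le) (auto intro: summable_add sx sd sy)
  ultimately show ?thesis
    using x y yx by (simp add: lp_norm_1_eq)
qed

lemma lp_norm_1_pos:
  assumes x: "lp_mem 1 x" and nz: "x \<noteq> (\<lambda>_. 0)"
  shows "lp_norm 1 x > 0"
proof -
  obtain i where "x i \<noteq> 0"
    using nz by auto
  then have "0 < (\<Sum>i. \<bar>x i\<bar>)"
    using x by (intro suminf_pos2[where i = i]) (auto simp: lp_mem_1_iff)
  then show ?thesis
    using x by (simp add: lp_norm_1_eq)
qed

lemma lp_norm_1_scale:
  assumes x: "lp_mem 1 x" and t: "t > 0"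
  shows "lp_mem 1 (\<lambda>i. t * x i)" and "lp_norm 1 (\<lambda>i. t * x i) = t * lp_norm 1 x"
proof -
  have "summable (\<lambda>i. t * \<bar>x i\<bar>)"
    using x by (simp add: lp_mem_1_iff summable_mult)
  then show tx: "lp_mem 1 (\<lambda>i. t * x i)"
    using t by (simp add: lp_mem_1_iff abs_mult)
  show "lp_norm 1 (\<lambda>i. t * x i) = t * lp_norm 1 x"
    using tx x t by (simp add: lp_norm_1_eq abs_mult suminf_mult lp_mem_1_iff)
qed

lemma lp_norm_1_unit_vector:
  "lp_mem 1 (\<lambda>i. if i = 0 then 1 else 0)" "lp_norm 1 (\<lambda>i. if i = 0 then 1 else 0) = 1"
proof -
  have "(\<lambda>i::nat. \<bar>if i = 0 then 1 else 0\<bar> :: real) sums 1"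
    using sums_single[of 0 "\<lambda>_. 1 :: real"] by (simp add: if_distrib cong: if_cong)
  then show "lp_mem 1 (\<lambda>i. if i = 0 then 1 else 0)" "lp_norm 1 (\<lambda>i. if i = 0 then 1 else 0) = 1"
    by (auto simp: lp_mem_1_iff lp_norm_1_eq sums_iff)
qed

lemma SUP_l1_unit_sphere_le:
  fixes f :: "(nat \<Rightarrow> real) \<Rightarrow> real"
  assumes "\<And>x. lp_mem 1 x \<Longrightarrow> lp_norm 1 x = 1 \<Longrightarrow> f x \<le> C"
  shows "(SUP x\<in>{x. lp_mem 1 x \<and> lp_norm 1 x = 1}. f x) \<le> C"
proof (rule cSUP_least)
  show "{x. lp_mem 1 x \<and> lp_norm 1 x = 1} \<noteq> {}"
    using lp_norm_1_unit_vector by blast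
qed (use assms in auto)

definition hurwitz_zeta :: "real \<Rightarrow> real \<Rightarrow> real" where
  "hurwitz_zeta a s = (\<Sum>i. inverse ((real i + a) powr s))"

lemma summable_hurwitz_zeta:
  assumes a: "a > 0" and s: "s > 1"
  shows "summable (\<lambda>i. inverse ((real i + a) powr s))"
proof -
  have "summable (\<lambda>n. real n powr (- s))"
    using s by (simp add: summable_real_powr_iff)
  then show ?thesis
  proof (rule summable_comparison_test'[where N = 1])
    fix n :: nat assume "n \<ge> 1"
    then have "inverse ((real n + a) powr s) \<le> inverse (real n powr s)"
      using a s by (intro le_imp_inverse_le powr_mono2) auto
    then show "norm (inverse ((real n + a) powr s)) \<le> real n powr (- s)"
      by (simp add: powr_minus)
  qed
qed

lemma hurwitz_zeta_nonneg: "a > 0 \<Longrightarrow> s > 1 \<Longrightarrow> hurwitz_zeta a s \<ge> 0"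
  unfolding hurwitz_zeta_def by (intro suminf_nonneg summable_hurwitz_zeta) auto

text \<open>For \<open>a \<ge> 1\<close> compare termwise with \<open>\<zeta>(2) = \<pi>\<^sup>2/6\<close>; for \<open>a < 1\<close> split off the first term.\<close>
lemma hurwitz_zeta_2_le:
  assumes a: "a > 0"
  shows "hurwitz_zeta a 2 \<le> (if a < 1 then 1 / a\<^sup>2 + pi\<^sup>2 / 6 else pi\<^sup>2 / 6)"
proof -
  define f where "f i = inverse ((real i + a) powr 2)" for i
  have f: "summable f"
    unfolding f_def by (rule summable_hurwitz_zeta[OF a]) simp
  have zeta_eq: "hurwitz_zeta a 2 = suminf f"
    unfolding hurwitz_zeta_def f_def ..
  have f_eq: "f i = 1 / (real i + a)\<^sup>2" for i
    using a by (simp add: f_def divide_inverse)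
  have zeta2: "(\<lambda>n. 1 / (real n + 1)\<^sup>2) sums (pi\<^sup>2 / 6)"
    using inverse_squares_sums by (simp add: add.commute)
  show ?thesis
  proof (cases "a < 1")
    case True
    have "(\<Sum>n. f (Suc n)) \<le> (\<Sum>n. 1 / (real n + 1)\<^sup>2)"
    proof (rule suminf_le)
      show "f (Suc n) \<le> 1 / (real n + 1)\<^sup>2" for n
        unfolding f_eq using a by (intro divide_left_mono power_mono) auto
    qed (use f zeta2 in \<open>auto simp: summable_Suc_iff sums_iff\<close>)
    then have "suminf f \<le> f 0 + pi\<^sup>2 / 6"
      using suminf_split_head[OF f] zeta2 by (simp add: sums_iff)
    then show ?thesis
      using True by (simp add: zeta_eq f_eq)
  next
    case False
    have "suminf f \<le> (\<Sum>n. 1 / (real n + 1)\<^sup>2)"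
    proof (rule suminf_le)
      show "f n \<le> 1 / (real n + 1)\<^sup>2" for n
        unfolding f_eq using False by (intro divide_left_mono power_mono) auto
    qed (use f zeta2 in \<open>auto simp: sums_iff\<close>)
    then show ?thesis
      using False zeta2 by (simp add: zeta_eq sums_iff)
  qed
qed

lemma lp_power_decay:
  assumes a: "a > 0" and p: "p > 0" and rp: "r * p > 1" and c: "c \<ge> 0"
    and decay: "\<And>i. \<bar>z i\<bar> \<le> c / (real i + a) powr r"
  shows "lp_mem p z" and "lp_norm p z \<le> c * hurwitz_zeta a (r * p) powr (1 / p)"
proof -
  define v where "v = (\<lambda>i. inverse ((real i + a) powr (r * p)))"
  have v: "summable v"
    unfolding v_def using a rp by (rule summable_hurwitz_zeta)
  have le: "\<bar>z i\<bar> powr p \<le> c powr p * v i" for i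
  proof -
    have "\<bar>z i\<bar> powr p \<le> (c / (real i + a) powr r) powr p"
      using decay[of i] p by (intro powr_mono2) auto
    also have "\<dots> = c powr p * v i"
      by (subst powr_divide, subst powr_powr) (use c in \<open>simp_all add: v_def divide_inverse\<close>)
    finally show ?thesis .
  qed
  have zp: "summable (\<lambda>i. \<bar>z i\<bar> powr p)"
    using v le by (intro summable_comparison_test'[OF summable_mult[OF v], where N = 0]) auto
  then show "lp_mem p z"
    by (simp add: lp_mem_def)
  have "lp_norm p z \<le> (c powr p * suminf v) powr (1 / p)"
    unfolding lp_norm_def suminf_mult[OF v, symmetric] using p zp v le
    by (intro powr_mono2 suminf_le summable_mult) (auto intro: suminf_nonneg)
  also have "\<dots> = c * suminf v powr (1 / p)"
    using p c by (simp add: powr_mult powr_powr)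
  finally show "lp_norm p z \<le> c * hurwitz_zeta a (r * p) powr (1 / p)"
    unfolding hurwitz_zeta_def v_def .
qed

lemma bounded_op_l1_lp_power_decay:
  assumes a: "a > 0" and p: "p > 0" and rp: "r * p > 1"
    and decay: "\<And>x i. lp_mem 1 x \<Longrightarrow> \<bar>T x i\<bar> \<le> lp_norm 1 x / (real i + a) powr r"
  shows "bounded_op_l1_lp p T"
  unfolding bounded_op_l1_lp_def
proof (intro exI[of _ "hurwitz_zeta a (r * p) powr (1 / p) + 1"] conjI allI impI)
  fix x assume "lp_mem 1 x"
  then have "lp_norm p (T x) \<le> lp_norm 1 x * hurwitz_zeta a (r * p) powr (1 / p)"
    using lp_power_decay(2)[OF a p rp lp_norm_nonneg decay] by blast
  also have "\<dots> \<le> (hurwitz_zeta a (r * p) powr (1 / p) + 1) * lp_norm 1 x"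
    using lp_norm_nonneg[of 1 x] by (simp add: algebra_simps)
  finally show "lp_norm p (T x) \<le> (hurwitz_zeta a (r * p) powr (1 / p) + 1) * lp_norm 1 x" .
qed (simp add: add_nonneg_pos)

text \<open>Continuity at \<open>x\<close> from \<open>l\<^sup>1\<close> into the sequences with the weighted sup-norm
  \<open>sup\<^sub>i (i + a)\<^sup>r \<bar>z\<^sub>i\<bar>\<close>; by \<open>lp_power_decay\<close> this norm dominates the \<open>l\<^sup>p\<close> norm when \<open>r p > 1\<close>.\<close>
definition weighted_continuous_at ::
    "real \<Rightarrow> real \<Rightarrow> ((nat \<Rightarrow> real) \<Rightarrow> nat \<Rightarrow> real) \<Rightarrow> (nat \<Rightarrow> real) \<Rightarrow> bool" where
  "weighted_continuous_at a r T x \<longleftrightarrow> (\<forall>e>0. \<exists>d>0. \<forall>y. lp_mem 1 y \<longrightarrow> lp_norm 1 (y - x) < d \<longrightarrow>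
      (\<forall>i. \<bar>T y i - T x i\<bar> \<le> e / (real i + a) powr r))"

lemma continuous_op_l1_lpI:
  assumes a: "a > 0" and p: "p > 0" and rp: "r * p > 1"
    and cont: "\<And>x. lp_mem 1 x \<Longrightarrow> weighted_continuous_at a r T x"
  shows "continuous_op_l1_lp p T"
  unfolding continuous_op_l1_lp_def
proof (intro allI impI)
  fix x and e :: real
  assume x: "lp_mem 1 x" and e: "e > 0"
  define Z where "Z = hurwitz_zeta a (r * p) powr (1 / p)"
  have Z: "Z \<ge> 0"
    by (simp add: Z_def)
  then have "e / (Z + 1) > 0"
    using e by simp
  then obtain d where d: "d > 0" and close: "\<And>y i. lp_mem 1 y \<Longrightarrow> lp_norm 1 (y - x) < d \<Longrightarrow>
      \<bar>(T y - T x) i\<bar> \<le> e / (Z + 1) / (real i + a) powr r"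
    using cont[OF x] unfolding weighted_continuous_at_def by auto
  show "\<exists>d>0. \<forall>y. lp_mem 1 y \<longrightarrow> lp_norm 1 (y - x) < d \<longrightarrow> lp_norm p (T y - T x) < e"
  proof (intro exI[of _ d] conjI allI impI)
    fix y assume "lp_mem 1 y" and "lp_norm 1 (y - x) < d"
    then have decay: "\<bar>(T y - T x) i\<bar> \<le> e / (Z + 1) / (real i + a) powr r" for i
      by (rule close)
    have "lp_norm p (T y - T x) \<le> e / (Z + 1) * Z"
      using lp_power_decay(2)[OF a p rp _ decay] e Z by (simp add: Z_def fun_diff_def)
    also have "\<dots> < e"
      using e Z by (simp add: field_simps)
    finally show "lp_norm p (T y - T x) < e" .
  qed (rule d)
qed

lemma l1_lp_operator_properties:
  assumes a: "a > 0" and p: "p > 0" and rp: "r * p > 1"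
    and decay: "\<And>x i. lp_mem 1 x \<Longrightarrow> \<bar>T x i\<bar> \<le> lp_norm 1 x / (real i + a) powr r"
    and cont: "\<And>x. lp_mem 1 x \<Longrightarrow> weighted_continuous_at a r T x"
  shows "(\<forall>x. lp_mem 1 x \<longrightarrow> lp_mem p (T x)) \<and> bounded_op_l1_lp p T \<and> continuous_op_l1_lp p T"
  using lp_power_decay(1)[OF a p rp lp_norm_nonneg decay] bounded_op_l1_lp_power_decay[OF a p rp decay]
    continuous_op_l1_lpI[OF a p rp cont]
  by blast

lemma weighted_continuous_at_zero:
  assumes T0: "T (\<lambda>_. 0) = (\<lambda>_. 0)"
    and decay: "\<And>y i. lp_mem 1 y \<Longrightarrow> \<bar>T y i\<bar> \<le> lp_norm 1 y / (real i + a) powr r"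
  shows "weighted_continuous_at a r T (\<lambda>_. 0)"
  unfolding weighted_continuous_at_def
proof (intro allI impI)
  fix e :: real assume "e > 0"
  show "\<exists>d>0. \<forall>y. lp_mem 1 y \<longrightarrow> lp_norm 1 (y - (\<lambda>_. 0)) < d \<longrightarrow>
      (\<forall>i. \<bar>T y i - T (\<lambda>_. 0) i\<bar> \<le> e / (real i + a) powr r)"
  proof (intro exI[of _ e] conjI allI impI)
    fix y i assume "lp_mem 1 y" and "lp_norm 1 (y - (\<lambda>_. 0)) < e"
    moreover have "y - (\<lambda>_. 0) = y"
      by (simp add: fun_diff_def)
    ultimately have "lp_norm 1 y / (real i + a) powr r \<le> e / (real i + a) powr r"
      by (intro divide_right_mono) auto
    then show "\<bar>T y i - T (\<lambda>_. 0) i\<bar> \<le> e / (real i + a) powr r"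
      using decay[OF \<open>lp_mem 1 y\<close>, of i] T0 by simp
  qed fact
qed

text \<open>Each of the two terms of \<open>g' (h' - h) + (g' - g) h\<close> gets half of the budget \<open>e / w\<close>.\<close>
lemma abs_mult_diff_le_split:
  fixes g g' h h' :: real
  assumes w: "w > 0" and G: "G > 0" and B: "B \<ge> 0" and e: "e > 0"
    and g': "\<bar>g'\<bar> \<le> G" and dh: "\<bar>h' - h\<bar> \<le> e / 2 / G / w"
    and dg: "\<bar>g' - g\<bar> \<le> e / 2 / (B + 1)" and h: "\<bar>h\<bar> \<le> B / w"
  shows "\<bar>g' * h' - g * h\<bar> \<le> e / w"
proof -
  have "e / 2 / (B + 1) * (B / w) = e / 2 / w * (B / (B + 1))"
    by simp
  also have "\<dots> \<le> e / 2 / w"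
    using B e w by (intro mult_left_le) auto
  finally have second: "e / 2 / (B + 1) * (B / w) \<le> e / 2 / w" .
  have "\<bar>g' * h' - g * h\<bar> = \<bar>g' * (h' - h) + (g' - g) * h\<bar>"
    by (simp add: algebra_simps)
  also have "\<dots> \<le> \<bar>g'\<bar> * \<bar>h' - h\<bar> + \<bar>g' - g\<bar> * \<bar>h\<bar>"
    by (metis abs_mult abs_triangle_ineq)
  also have "\<dots> \<le> G * (e / 2 / G / w) + e / 2 / (B + 1) * (B / w)"
    using g' dh dg h G by (intro add_mono mult_mono) auto
  also have "\<dots> \<le> e / 2 / w + e / 2 / w"
    using G second by simp
  finally show ?thesis
    by simp
qed

lemma weighted_continuous_at_mult:
  assumes a: "a > 0"
    and H: "weighted_continuous_at a r H x"
    and bound: "\<And>i. \<bar>H x i\<bar> \<le> B / (real i + a) powr r"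
    and g: "\<And>e. e > 0 \<Longrightarrow> \<exists>d>0. \<forall>y. lp_mem 1 y \<longrightarrow> lp_norm 1 (y - x) < d \<longrightarrow> \<bar>g y - g x\<bar> < e"
  shows "weighted_continuous_at a r (\<lambda>y i. g y * H y i) x"
  unfolding weighted_continuous_at_def
proof (intro allI impI)
  fix e :: real assume e: "e > 0"
  define G where "G = \<bar>g x\<bar> + 1"
  have G: "G > 0"
    by (simp add: G_def add_nonneg_pos)
  have "0 \<le> B / (real 0 + a) powr r"
    using bound[of 0] abs_ge_zero order_trans by blast
  then have B: "B \<ge> 0"
    using a by (simp add: zero_le_divide_iff)
  have "e / 2 / G > 0"
    using e G by simp
  then obtain d1 where d1: "d1 > 0" and H_close: "\<And>y i. lp_mem 1 y \<Longrightarrow> lp_norm 1 (y - x) < d1 \<Longrightarrow>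
      \<bar>H y i - H x i\<bar> \<le> e / 2 / G / (real i + a) powr r"
    using H unfolding weighted_continuous_at_def by blast
  have "min 1 (e / 2 / (B + 1)) > 0"
    using e B by simp
  then obtain d2 where d2: "d2 > 0" and g_close: "\<And>y. lp_mem 1 y \<Longrightarrow> lp_norm 1 (y - x) < d2 \<Longrightarrow>
      \<bar>g y - g x\<bar> < min 1 (e / 2 / (B + 1))"
    using g by blast
  show "\<exists>d>0. \<forall>y. lp_mem 1 y \<longrightarrow> lp_norm 1 (y - x) < d \<longrightarrow>
      (\<forall>i. \<bar>g y * H y i - g x * H x i\<bar> \<le> e / (real i + a) powr r)"
  proof (intro exI[of _ "min d1 d2"] conjI allI impI)
    fix y i assume y: "lp_mem 1 y" and close: "lp_norm 1 (y - x) < min d1 d2"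
    have "(real i + a) powr r > 0"
      using a by simp
    then show "\<bar>g y * H y i - g x * H x i\<bar> \<le> e / (real i + a) powr r"
      using g_close[OF y] H_close[OF y] close bound[of i] G B e
      by (intro abs_mult_diff_le_split) (auto simp: G_def)
  qed (use d1 d2 in simp)
qed

section \<open>Real roots\<close>

lemma real_root_add_le:
  assumes n: "n > 0" and s: "s \<ge> 0" and t: "t \<ge> 0"
  shows "root n (s + t) \<le> root n s + root n t"
proof -
  define A B where "A = root n s" and "B = root n t"
  have A: "A \<ge> 0" "A ^ n = s" and B: "B \<ge> 0" "B ^ n = t"
    using n s t by (auto simp: A_def B_def)
  obtain k where k: "n = Suc k"
    using n by (cases n) auto
  have "s + t = A * A ^ k + B * B ^ k"
    using A B by (simp add: k)
  also have "\<dots> \<le> A * (A + B) ^ k + B * (A + B) ^ k"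
    using A B by (intro add_mono mult_left_mono power_mono) auto
  also have "\<dots> = (A + B) ^ n"
    by (simp add: k algebra_simps)
  finally have "root n (s + t) \<le> root n ((A + B) ^ n)"
    using n by simp
  also have "\<dots> = A + B"
    using n A B by (simp add: real_root_power_cancel)
  finally show ?thesis
    by (simp add: A_def B_def)
qed

lemma abs_real_root_diff_le_nonneg:
  assumes n: "n > 0" and "u \<ge> 0" and "v \<ge> 0"
  shows "\<bar>root n u - root n v\<bar> \<le> root n \<bar>u - v\<bar>"
proof -
  have le: "root n s - root n t \<le> root n (s - t)" if "0 \<le> t" "t \<le> s" for s t
    using real_root_add_le[OF n that(1), of "s - t"] that by simp
  show ?thesis
    using le[of v u] le[of u v] assms by (cases "v \<le> u") (auto simp: abs_if)
qed

text \<open>For arguments of opposite sign each of \<open>\<bar>u\<bar>, \<bar>v\<bar>\<close> is at most \<open>\<bar>u - v\<bar>\<close>.\<close>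
lemma abs_real_root_diff_le:
  assumes n: "n > 0"
  shows "\<bar>root n u - root n v\<bar> \<le> 2 * root n \<bar>u - v\<bar>"
proof -
  have nonneg: "0 \<le> root n \<bar>u - v\<bar>"
    using n by simp
  consider "u \<ge> 0" "v \<ge> 0" | "u \<le> 0" "v \<le> 0" | "u * v \<le> 0"
    by (metis linear mult_nonneg_nonpos mult_nonpos_nonneg)
  then show ?thesis
  proof cases
    case 1
    then show ?thesis
      using abs_real_root_diff_le_nonneg[OF n, of u v] nonneg by linarith
  next
    case 2
    then have "\<bar>root n (- u) - root n (- v)\<bar> \<le> root n \<bar>(- u) - (- v)\<bar>"
      by (intro abs_real_root_diff_le_nonneg[OF n]) auto
    then show ?thesis
      using nonneg by (simp add: real_root_minus abs_minus_commute)
  next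
    case 3
    then have "\<bar>u\<bar> \<le> \<bar>u - v\<bar>" "\<bar>v\<bar> \<le> \<bar>u - v\<bar>"
      by (auto simp: mult_le_0_iff)
    then have "root n \<bar>u\<bar> + root n \<bar>v\<bar> \<le> 2 * root n \<bar>u - v\<bar>"
      using real_root_le_mono[OF n] by (smt (verit))
    then show ?thesis
      using n abs_triangle_ineq4[of "root n u" "root n v"] by (simp add: real_root_abs)
  qed
qed

lemma weighted_continuous_at_root:
  assumes n: "n > 0" and a: "a > 0" and T: "weighted_continuous_at a r T x"
  shows "weighted_continuous_at a (r / n) (\<lambda>y i. root n (T y i)) x"
  unfolding weighted_continuous_at_def
proof (intro allI impI)
  fix e :: real assume e: "e > 0"
  then have "(e / 2) ^ n > 0"
    by simp
  then obtain d where d: "d > 0" and close: "\<And>y i. lp_mem 1 y \<Longrightarrow> lp_norm 1 (y - x) < d \<Longrightarrow>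
      \<bar>T y i - T x i\<bar> \<le> (e / 2) ^ n / (real i + a) powr r"
    using T unfolding weighted_continuous_at_def by blast
  show "\<exists>d>0. \<forall>y. lp_mem 1 y \<longrightarrow> lp_norm 1 (y - x) < d \<longrightarrow>
      (\<forall>i. \<bar>root n (T y i) - root n (T x i)\<bar> \<le> e / (real i + a) powr (r / n))"
  proof (intro exI[of _ d] conjI allI impI)
    fix y i assume y: "lp_mem 1 y" and "lp_norm 1 (y - x) < d"
    then have "\<bar>root n (T y i) - root n (T x i)\<bar> \<le> 2 * root n ((e / 2) ^ n / (real i + a) powr r)"
      using order_trans[OF abs_real_root_diff_le[OF n]] close n by simp
    also have "\<dots> = 2 * (e / 2) / root n ((real i + a) powr r)"
      using n e by (simp add: real_root_divide real_root_power_cancel)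
    also have "root n ((real i + a) powr r) = (real i + a) powr (r / n)"
      using n a by (simp add: root_powr_inverse powr_powr)
    finally show "\<bar>root n (T y i) - root n (T x i)\<bar> \<le> e / (real i + a) powr (r / n)"
      by simp
  qed (rule d)
qed

section \<open>Sums over tuples\<close>

lemma has_sum_majorant:
  fixes f g :: "'a \<Rightarrow> real"
  assumes g: "(g has_sum S) A" and le: "\<And>j. j \<in> A \<Longrightarrow> \<bar>f j\<bar> \<le> g j"
  shows "f summable_on A" and "\<bar>infsum f A\<bar> \<le> S"
proof -
  have "(\<lambda>j. norm (g j)) summable_on A"
  proof (subst summable_on_cong)
    show "norm (g j) = g j" if "j \<in> A" for j
      using le[OF that] by simp
  qed (use g in \<open>auto simp: summable_on_def\<close>)
  then have fabs: "(\<lambda>j. norm (f j)) summable_on A"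
    by (rule Infinite_Sum.abs_summable_on_comparison_test) (use le in force)
  then show "f summable_on A"
    by (rule abs_summable_summable)
  have "\<bar>infsum f A\<bar> \<le> infsum (\<lambda>j. \<bar>f j\<bar>) A"
    using norm_infsum_bound[OF fabs] by simp
  also have "\<dots> \<le> infsum g A"
    using fabs g le by (intro infsum_mono) (auto simp: summable_on_def)
  also have "\<dots> = S"
    using g by (rule infsumI)
  finally show "\<bar>infsum f A\<bar> \<le> S" .
qed

lemma infsum_diff:
  fixes f g :: "'a \<Rightarrow> real"
  assumes "f summable_on A" and "g summable_on A"
  shows "infsum (\<lambda>j. f j - g j) A = infsum f A - infsum g A"
  using infsum_add[OF assms(1) summable_on_uminus[THEN iffD2, OF assms(2)]]
  by (simp add: infsum_uminus)

lemma has_sum_sum_family: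
  fixes f :: "'b \<Rightarrow> 'a \<Rightarrow> real"
  assumes "finite L" and "\<And>l. l \<in> L \<Longrightarrow> (f l has_sum s l) A"
  shows "((\<lambda>j. \<Sum>l\<in>L. f l j) has_sum (\<Sum>l\<in>L. s l)) A"
  using assms by (induction L rule: finite_induct) (simp_all add: has_sum_add)

lemma has_sum_PiE_prod_nonneg:
  fixes w :: "nat \<Rightarrow> nat \<Rightarrow> real"
  assumes nonneg: "\<And>k i. k < n \<Longrightarrow> w k i \<ge> 0" and summable: "\<And>k. k < n \<Longrightarrow> summable (w k)"
  shows "((\<lambda>j. \<Prod>k<n. w k (j k)) has_sum (\<Prod>k<n. suminf (w k))) (PiE {..<n} (\<lambda>_. UNIV))"
proof -
  have hs: "(w k has_sum suminf (w k)) UNIV" if "k < n" for k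
    using sums_nonneg_imp_has_sum[OF summable_sums[OF summable[OF that]]] nonneg[OF that] by blast
  have abs: "(\<lambda>i. norm (w k i)) summable_on UNIV" if "k < n" for k
    using hs[OF that] nonneg[OF that] by (auto simp: summable_on_def)
  have "Infinite_Set_Sum.abs_summable_on (\<lambda>j. \<Prod>k\<in>{..<n}. w k (j k)) (PiE {..<n} (\<lambda>_. UNIV))"
  proof (intro abs_summable_on_prod_PiE)
    show "Infinite_Set_Sum.abs_summable_on (w k) UNIV" if "k \<in> {..<n}" for k
      using abs[of k] that abs_summable_equivalent[of "w k" UNIV] by simp
  qed auto
  then have "(\<lambda>j. \<Prod>k<n. w k (j k)) summable_on PiE {..<n} (\<lambda>_. UNIV)"
    by (metis abs_summable_equivalent summable_on_iff_abs_summable_on_real)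
  moreover have "infsum (\<lambda>j. \<Prod>k<n. w k (j k)) (PiE {..<n} (\<lambda>_. UNIV)) = (\<Prod>k<n. suminf (w k))"
    using abs hs by (subst infsum_prod_PiE_abs) (auto intro!: prod.cong infsumI)
  ultimately show ?thesis
    using has_sum_iff by blast
qed

lemma abs_prod_diff_le:
  fixes a b :: "nat \<Rightarrow> real"
  shows "\<bar>(\<Prod>k<n. b k) - (\<Prod>k<n. a k)\<bar> \<le>
    (\<Sum>l<n. \<Prod>k<n. if k < l then \<bar>a k\<bar> else if k = l then \<bar>b k - a k\<bar> else \<bar>b k\<bar>)"
proof (induction n)
  case 0
  then show ?case by simp
next
  case (Suc n)
  let ?c = "\<lambda>l k. if k < l then \<bar>a k\<bar> else if k = l then \<bar>b k - a k\<bar> else \<bar>b k\<bar>"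
  have "\<bar>(\<Prod>k<Suc n. b k) - (\<Prod>k<Suc n. a k)\<bar>
      = \<bar>b n * ((\<Prod>k<n. b k) - (\<Prod>k<n. a k)) + (b n - a n) * (\<Prod>k<n. a k)\<bar>"
    by (simp add: algebra_simps)
  also have "\<dots> \<le> \<bar>b n\<bar> * \<bar>(\<Prod>k<n. b k) - (\<Prod>k<n. a k)\<bar> + \<bar>b n - a n\<bar> * \<bar>\<Prod>k<n. a k\<bar>"
    by (metis abs_mult abs_triangle_ineq)
  also have "\<dots> \<le> \<bar>b n\<bar> * (\<Sum>l<n. \<Prod>k<n. ?c l k) + \<bar>b n - a n\<bar> * \<bar>\<Prod>k<n. a k\<bar>"
    using Suc.IH by (intro add_right_mono mult_left_mono) auto
  also have "\<dots> = (\<Sum>l<n. \<Prod>k<Suc n. ?c l k) + (\<Prod>k<Suc n. ?c n k)"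
    by (simp add: sum_distrib_left abs_prod mult.commute)
  also have "\<dots> = (\<Sum>l<Suc n. \<Prod>k<Suc n. ?c l k)"
    by simp
  finally show ?case .
qed

lemma prod_if_eq_mult_power:
  fixes D R :: real
  assumes "l < n"
  shows "(\<Prod>k<n. if k = l then D else R) = D * R ^ (n - 1)"
proof -
  have "(\<Prod>k<n. if k = l then D else R) = D * (\<Prod>k\<in>{..<n} - {l}. if k = l then D else R)"
    using assms by (subst prod.remove[of _ l]) auto
  also have "(\<Prod>k\<in>{..<n} - {l}. if k = l then D else R) = R ^ (n - 1)"
    using assms by (simp add: card_Diff_singleton)
  finally show ?thesis .
qed

text \<open>Telescoping the difference of the products, each term factors into one-dimensional
  sums, one of which is \<open>\<parallel>y - x\<parallel>\<^sub>1\<close> while the other \<open>n - 1\<close> are bounded by \<open>R\<close>.\<close>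
lemma prod_diff_majorant_l1:
  assumes x: "lp_mem 1 x" and y: "lp_mem 1 y"
    and Rx: "lp_norm 1 x \<le> R" and Ry: "lp_norm 1 y \<le> R"
  obtains g S where "(g has_sum S) (PiE {..<n} (\<lambda>_. UNIV))"
    and "\<And>j. \<bar>(\<Prod>k<n. y (j k)) - (\<Prod>k<n. x (j k))\<bar> \<le> g j"
    and "S \<le> real n * R ^ (n - 1) * lp_norm 1 (y - x)"
proof -
  define w where "w l k = (\<lambda>i. if k < l then \<bar>x i\<bar> else if k = l then \<bar>y i - x i\<bar> else \<bar>y i\<bar>)"
    for l k :: nat
  have yx: "lp_mem 1 (y - x)"
    using x y by (rule lp_mem_1_diff)
  have summable_w: "summable (w l k)" for l k
    using x y yx by (cases "k < l"; cases "k = l") (auto simp: w_def lp_mem_1_iff)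
  have suminf_w: "suminf (w l k) =
      (if k < l then lp_norm 1 x else if k = l then lp_norm 1 (y - x) else lp_norm 1 y)" for l k
    using x y yx by (simp add: w_def lp_norm_1_eq)
  have "((\<lambda>j. \<Sum>l<n. \<Prod>k<n. w l k (j k)) has_sum (\<Sum>l<n. \<Prod>k<n. suminf (w l k))) (PiE {..<n} (\<lambda>_. UNIV))"
    using summable_w by (intro has_sum_sum_family has_sum_PiE_prod_nonneg) (auto simp: w_def)
  moreover have "\<bar>(\<Prod>k<n. y (j k)) - (\<Prod>k<n. x (j k))\<bar> \<le> (\<Sum>l<n. \<Prod>k<n. w l k (j k))" for j
    using abs_prod_diff_le[where n = n and b = "\<lambda>k. y (j k)" and a = "\<lambda>k. x (j k)"] by (simp add: w_def)
  moreover have "(\<Sum>l<n. \<Prod>k<n. suminf (w l k)) \<le> (\<Sum>l<n. lp_norm 1 (y - x) * R ^ (n - 1))"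
  proof (intro sum_mono)
    fix l assume "l \<in> {..<n}"
    then have "(\<Prod>k<n. suminf (w l k)) \<le> (\<Prod>k<n. if k = l then lp_norm 1 (y - x) else R)"
      unfolding suminf_w using Rx Ry lp_norm_nonneg[of 1 x] lp_norm_nonneg[of 1 y] lp_norm_nonneg[of 1 "y - x"]
      by (intro prod_mono) auto
    also have "\<dots> = lp_norm 1 (y - x) * R ^ (n - 1)"
      using \<open>l \<in> {..<n}\<close> by (simp add: prod_if_eq_mult_power)
    finally show "(\<Prod>k<n. suminf (w l k)) \<le> lp_norm 1 (y - x) * R ^ (n - 1)" .
  qed
  ultimately show ?thesis
    by (intro that) (auto simp: mult_ac)
qed

section \<open>The generalized Hilbert tensor\<close>

definition hilbert_term :: "nat \<Rightarrow> real \<Rightarrow> (nat \<Rightarrow> real) \<Rightarrow> nat \<Rightarrow> (nat \<Rightarrow> nat) \<Rightarrow> real" where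
  "hilbert_term m a x i j = (\<Prod>k<m-1. x (j k)) / (real i + (\<Sum>k<m-1. real (j k)) + a)"

lemma Hinf_eq_infsum: "Hinf m a x i = infsum (hilbert_term m a x i) (PiE {..<m-1} (\<lambda>_. UNIV))"
  by (simp add: Hinf_def hilbert_term_def[abs_def])

lemma abs_div_hilbert_denominator_le:
  assumes "a > 0"
  shows "\<bar>u / (real i + (\<Sum>k<n. real (j k)) + a)\<bar> \<le> \<bar>u\<bar> / (real i + a)"
proof -
  have le: "real i + a \<le> real i + (\<Sum>k<n. real (j k)) + a"
    by (simp add: sum_nonneg)
  have "\<bar>u / (real i + (\<Sum>k<n. real (j k)) + a)\<bar> = \<bar>u\<bar> / (real i + (\<Sum>k<n. real (j k)) + a)"
    using le assms by (simp add: abs_divide)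
  also have "\<dots> \<le> \<bar>u\<bar> / (real i + a)"
    using le assms by (intro divide_left_mono) auto
  finally show ?thesis .
qed

lemma abs_hilbert_term_le:
  assumes "a > 0"
  shows "\<bar>hilbert_term m a x i j\<bar> \<le> (\<Prod>k<m-1. \<bar>x (j k)\<bar>) / (real i + a)"
  unfolding hilbert_term_def abs_prod[symmetric] by (rule abs_div_hilbert_denominator_le[OF assms])

lemma hilbert_term_majorant:
  assumes a: "a > 0" and x: "lp_mem 1 x"
  shows "((\<lambda>j. (\<Prod>k<m-1. \<bar>x (j k)\<bar>) / (real i + a)) has_sum (lp_norm 1 x ^ (m - 1) / (real i + a)))
           (PiE {..<m-1} (\<lambda>_. UNIV))"
  using has_sum_cmult_left[OF has_sum_PiE_prod_nonneg[where n = "m - 1" and w = "\<lambda>_ i. \<bar>x i\<bar>"],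
      of "inverse (real i + a)"] x
  by (simp add: lp_mem_1_iff lp_norm_1_eq divide_inverse)

lemma hilbert_term_summable:
  assumes "a > 0" and "lp_mem 1 x"
  shows "hilbert_term m a x i summable_on PiE {..<m-1} (\<lambda>_. UNIV)"
  by (rule has_sum_majorant(1)[OF hilbert_term_majorant[OF assms, of m i] abs_hilbert_term_le[OF assms(1), of m x i]])

lemma abs_Hinf_le:
  assumes "a > 0" and "lp_mem 1 x"
  shows "\<bar>Hinf m a x i\<bar> \<le> lp_norm 1 x ^ (m - 1) / (real i + a)"
  unfolding Hinf_eq_infsum
  by (rule has_sum_majorant(2)[OF hilbert_term_majorant[OF assms, of m i] abs_hilbert_term_le[OF assms(1), of m x i]])

lemma abs_Hinf_diff_le:
  assumes a: "a > 0" and x: "lp_mem 1 x" and y: "lp_mem 1 y"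
    and Rx: "lp_norm 1 x \<le> R" and Ry: "lp_norm 1 y \<le> R"
  shows "\<bar>Hinf m a y i - Hinf m a x i\<bar> \<le> real (m - 1) * R ^ (m - 2) * lp_norm 1 (y - x) / (real i + a)"
proof -
  let ?J = "PiE {..<m - 1} (\<lambda>_::nat. UNIV :: nat set)"
  obtain g S where g: "(g has_sum S) ?J"
    and dominated: "\<And>j. \<bar>(\<Prod>k<m - 1. y (j k)) - (\<Prod>k<m - 1. x (j k))\<bar> \<le> g j"
    and S: "S \<le> real (m - 1) * R ^ (m - 1 - 1) * lp_norm 1 (y - x)"
    using prod_diff_majorant_l1[OF x y Rx Ry] by blast
  have "((\<lambda>j. g j / (real i + a)) has_sum (S / (real i + a))) ?J"
    using has_sum_cmult_left[OF g, of "inverse (real i + a)"] by (simp add: divide_inverse)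
  moreover have "\<bar>hilbert_term m a y i j - hilbert_term m a x i j\<bar> \<le> g j / (real i + a)" for j
  proof -
    have "\<bar>hilbert_term m a y i j - hilbert_term m a x i j\<bar>
        \<le> \<bar>(\<Prod>k<m - 1. y (j k)) - (\<Prod>k<m - 1. x (j k))\<bar> / (real i + a)"
      using abs_div_hilbert_denominator_le[OF a] by (simp add: hilbert_term_def diff_divide_distrib[symmetric])
    also have "\<dots> \<le> g j / (real i + a)"
      using a dominated by (intro divide_right_mono) auto
    finally show ?thesis .
  qed
  ultimately have "\<bar>infsum (\<lambda>j. hilbert_term m a y i j - hilbert_term m a x i j) ?J\<bar> \<le> S / (real i + a)"
    by (rule has_sum_majorant(2))
  also have "\<dots> \<le> real (m - 1) * R ^ (m - 2) * lp_norm 1 (y - x) / (real i + a)"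
    using S a by (intro divide_right_mono) (simp_all add: numeral_2_eq_2)
  finally show ?thesis
    using a x y by (simp only: Hinf_eq_infsum infsum_diff hilbert_term_summable)
qed

lemma Hinf_scale: "Hinf m a (\<lambda>i. t * x i) i = t ^ (m - 1) * Hinf m a x i"
proof -
  have "hilbert_term m a (\<lambda>i. t * x i) i = (\<lambda>j. t ^ (m - 1) * hilbert_term m a x i j)"
    by (simp add: hilbert_term_def prod.distrib fun_eq_iff)
  then show ?thesis
    by (simp add: Hinf_eq_infsum infsum_cmult_right')
qed

lemma weighted_continuous_at_Hinf:
  assumes a: "a > 0" and x: "lp_mem 1 x"
  shows "weighted_continuous_at a 1 (Hinf m a) x"
  unfolding weighted_continuous_at_def
proof (intro allI impI)
  fix e :: real assume e: "e > 0"
  define R where "R = lp_norm 1 x + 1"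
  define K where "K = real (m - 1) * R ^ (m - 2)"
  have K: "K \<ge> 0"
    using lp_norm_nonneg[of 1 x] by (simp add: K_def R_def)
  show "\<exists>d>0. \<forall>y. lp_mem 1 y \<longrightarrow> lp_norm 1 (y - x) < d \<longrightarrow>
      (\<forall>i. \<bar>Hinf m a y i - Hinf m a x i\<bar> \<le> e / (real i + a) powr 1)"
  proof (intro exI[of _ "min 1 (e / (K + 1))"] conjI allI impI)
    fix y i assume y: "lp_mem 1 y" and close: "lp_norm 1 (y - x) < min 1 (e / (K + 1))"
    have "lp_norm 1 y \<le> R"
      using lp_norm_1_triangle_ineq3[OF x y] close unfolding R_def by linarith
    then have "\<bar>Hinf m a y i - Hinf m a x i\<bar> \<le> K * lp_norm 1 (y - x) / (real i + a)"
      using abs_Hinf_diff_le[OF a x y] by (simp add: K_def R_def)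
    also have "\<dots> \<le> e / (real i + a)"
    proof (intro divide_right_mono)
      have "K * lp_norm 1 (y - x) \<le> (K + 1) * lp_norm 1 (y - x)"
        using lp_norm_nonneg[of 1 "y - x"] by (simp add: algebra_simps)
      also have "\<dots> \<le> e"
        using close K by (simp add: field_simps)
      finally show "K * lp_norm 1 (y - x) \<le> e" .
    qed (use a in simp)
    finally show "\<bar>Hinf m a y i - Hinf m a x i\<bar> \<le> e / (real i + a) powr 1"
      using a by simp
  qed (use e K in simp)
qed

section \<open>The operators\<close>

text \<open>The case distinction in the definition of \<open>Tinf\<close> is redundant, since \<open>0 powr s = 0\<close>.\<close>
lemma Tinf_eq: "Tinf m a x = (\<lambda>i. lp_norm 1 x powr (2 - real m) * Hinf m a x i)"
  by (simp add: Tinf_def lp_norm_def)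

lemma powr_2_minus_mult_power:
  assumes "N > 0" and "m \<ge> 1"
  shows "N powr (2 - real m) * N ^ (m - 1) = N"
  using assms by (simp add: powr_realpow[symmetric] powr_add[symmetric] of_nat_diff)

lemma abs_Tinf_le:
  assumes a: "a > 0" and m: "m \<ge> 2" and x: "lp_mem 1 x"
  shows "\<bar>Tinf m a x i\<bar> \<le> lp_norm 1 x / (real i + a) powr 1"
proof (cases "lp_norm 1 x = 0")
  case True
  then show ?thesis
    by (simp add: Tinf_eq)
next
  case False
  then have N: "lp_norm 1 x > 0"
    using lp_norm_nonneg[of 1 x] by simp
  have "\<bar>Tinf m a x i\<bar> = lp_norm 1 x powr (2 - real m) * \<bar>Hinf m a x i\<bar>"
    by (simp add: Tinf_eq abs_mult)
  also have "\<dots> \<le> lp_norm 1 x powr (2 - real m) * (lp_norm 1 x ^ (m - 1) / (real i + a))"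
    using abs_Hinf_le[OF a x] by (intro mult_left_mono) auto
  also have "\<dots> = lp_norm 1 x / (real i + a) powr 1"
    using powr_2_minus_mult_power[OF N] m a by simp
  finally show ?thesis .
qed

lemma weighted_continuous_at_Tinf:
  assumes a: "a > 0" and m: "m \<ge> 2" and x: "lp_mem 1 x"
  shows "weighted_continuous_at a 1 (Tinf m a) x"
proof (cases "x = (\<lambda>_. 0)")
  case True
  have "Tinf m a (\<lambda>_. 0) = (\<lambda>_. 0)"
    by (simp add: Tinf_def)
  then show ?thesis
    unfolding True using abs_Tinf_le[OF a m] by (rule weighted_continuous_at_zero)
next
  case False
  define N where "N = lp_norm 1 x"
  have N: "N > 0"
    unfolding N_def using x False by (rule lp_norm_1_pos)
  have "isCont (\<lambda>u. u powr (2 - real m)) N"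
    using N by (intro continuous_intros) auto
  then have norm_cont: "\<exists>d>0. \<forall>y. lp_mem 1 y \<longrightarrow> lp_norm 1 (y - x) < d \<longrightarrow>
      \<bar>lp_norm 1 y powr (2 - real m) - lp_norm 1 x powr (2 - real m)\<bar> < e" if "e > 0" for e
    using that lp_norm_1_triangle_ineq3[OF x] unfolding continuous_at_eps_delta dist_real_def N_def
    by (meson order_le_less_trans)
  have "weighted_continuous_at a 1 (\<lambda>y i. lp_norm 1 y powr (2 - real m) * Hinf m a y i) x"
    using weighted_continuous_at_Hinf[OF a x] abs_Hinf_le[OF a x] norm_cont a
    by (intro weighted_continuous_at_mult) auto
  then show ?thesis
    by (simp add: Tinf_eq[abs_def])
qed

lemma Tinf_pos_homogeneous:
  assumes m: "m \<ge> 2"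
  shows "pos_homogeneous_on_l1 (Tinf m a)"
  unfolding pos_homogeneous_on_l1_def
proof (intro allI impI ext)
  fix t :: real and x i assume t: "t > 0" and x: "lp_mem 1 x"
  have "Tinf m a (\<lambda>i. t * x i) i =
      (t powr (2 - real m) * t ^ (m - 1)) * (lp_norm 1 x powr (2 - real m) * Hinf m a x i)"
    using t by (simp add: Tinf_eq lp_norm_1_scale[OF x t] Hinf_scale powr_mult lp_norm_nonneg)
  also have "\<dots> = t * Tinf m a x i"
    using powr_2_minus_mult_power[OF t] m by (simp add: Tinf_eq)
  finally show "Tinf m a (\<lambda>i. t * x i) i = t * Tinf m a x i" .
qed

lemma Tinf_unit_norm_le_Cconst:
  assumes a: "a > 0" and m: "m \<ge> 2" and x: "lp_mem 1 x" and "lp_norm 1 x = 1"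
  shows "lp_norm 2 (Tinf m a x) \<le> Cconst a"
proof -
  have "lp_norm 2 (Tinf m a x) \<le> hurwitz_zeta a 2 powr (1 / 2)"
    using lp_power_decay(2)[OF a _ _ _ abs_Tinf_le[OF a m x], of 2] \<open>lp_norm 1 x = 1\<close> by simp
  also have "\<dots> \<le> (if a < 1 then 1 / a\<^sup>2 + pi\<^sup>2 / 6 else pi\<^sup>2 / 6) powr (1 / 2)"
    using hurwitz_zeta_2_le[OF a] hurwitz_zeta_nonneg[OF a, of 2] by (intro powr_mono2) auto
  also have "\<dots> = Cconst a"
    by (simp add: Cconst_def powr_half_sqrt real_sqrt_divide)
  finally show ?thesis .
qed

lemma abs_Finf_le:
  assumes a: "a > 0" and m: "m \<ge> 2" and x: "lp_mem 1 x"
  shows "\<bar>Finf m a x i\<bar> \<le> lp_norm 1 x / (real i + a) powr (1 / real (m - 1))"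
proof -
  have n: "m - 1 > 0"
    using m by simp
  have "\<bar>Finf m a x i\<bar> = root (m - 1) \<bar>Hinf m a x i\<bar>"
    using n by (simp add: Finf_def real_root_abs)
  also have "\<dots> \<le> root (m - 1) (lp_norm 1 x ^ (m - 1) / (real i + a))"
    using n abs_Hinf_le[OF a x] by simp
  also have "\<dots> = lp_norm 1 x / (real i + a) powr (1 / real (m - 1))"
    using n a lp_norm_nonneg[of 1 x]
    by (simp only: real_root_divide real_root_power_cancel root_powr_inverse[of "m - 1" "real i + a"])
  finally show ?thesis .
qed

lemma weighted_continuous_at_Finf:
  assumes a: "a > 0" and m: "m \<ge> 2" and x: "lp_mem 1 x"
  shows "weighted_continuous_at a (1 / real (m - 1)) (Finf m a) x"
proof -
  have n: "m - 1 > 0"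
    using m by simp
  have "Finf m a = (\<lambda>y i. root (m - 1) (Hinf m a y i))"
    by (simp add: Finf_def[abs_def])
  then show ?thesis
    using weighted_continuous_at_root[OF n a weighted_continuous_at_Hinf[OF a x, of m]] by simp
qed

lemma Finf_pos_homogeneous:
  assumes m: "m \<ge> 2"
  shows "pos_homogeneous_on_l1 (Finf m a)"
  unfolding pos_homogeneous_on_l1_def
proof (intro allI impI ext)
  fix t :: real and x i assume t: "t > 0"
  have "Finf m a (\<lambda>i. t * x i) i = root (m - 1) (t ^ (m - 1)) * Finf m a x i"
    by (simp add: Finf_def Hinf_scale real_root_mult)
  also have "\<dots> = t * Finf m a x i"
    using m t by (simp add: real_root_power_cancel)
  finally show "Finf m a (\<lambda>i. t * x i) i = t * Finf m a x i" .
qed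

lemma Finf_unit_norm_le_Kconst:
  assumes a: "a > 0" and m: "m \<ge> 2" and x: "lp_mem 1 x" and "lp_norm 1 x = 1"
  shows "lp_norm (2 * (real m - 1)) (Finf m a x) \<le> Kconst m a"
proof -
  have n: "real (m - 1) = real m - 1" "real m - 1 > 0"
    using m by auto
  have two: "1 / real (m - 1) * (2 * (real m - 1)) = 2"
    using n by (simp add: field_simps)
  have "lp_norm (2 * (real m - 1)) (Finf m a x)
      \<le> 1 * hurwitz_zeta a (1 / real (m - 1) * (2 * (real m - 1))) powr (1 / (2 * (real m - 1)))"
    by (rule lp_power_decay(2)[OF a _ _ _ abs_Finf_le[OF a m x], unfolded \<open>lp_norm 1 x = 1\<close>])
      (use n two in auto)
  also have "\<dots> \<le> (if a < 1 then 1 / a\<^sup>2 + pi\<^sup>2 / 6 else pi\<^sup>2 / 6) powr (1 / (2 * (real m - 1)))"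
    unfolding two mult_1 using hurwitz_zeta_2_le[OF a] hurwitz_zeta_nonneg[OF a, of 2] n
    by (intro powr_mono2) auto
  also have "\<dots> = Kconst m a"
    by (simp add: Kconst_def)
  finally show ?thesis .
qed

theorem theorem3p2:
  fixes m :: nat and a :: real
  assumes "m \<ge> 2" and "a > 0"
  shows "(even m \<longrightarrow>
            (\<forall>p. real m - 1 < p \<longrightarrow>
               (\<forall>x. lp_mem 1 x \<longrightarrow> lp_mem p (Finf m a x)) \<and>
               bounded_op_l1_lp p (Finf m a) \<and>
               continuous_op_l1_lp p (Finf m a) \<and>
               pos_homogeneous_on_l1 (Finf m a)) \<and>
            (SUP x\<in>{x. lp_mem 1 x \<and> lp_norm 1 x = 1}. lp_norm (2 * (real m - 1)) (Finf m a x))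
               \<le> Kconst m a) \<and>
         ((\<forall>p. 1 < p \<longrightarrow>
               (\<forall>x. lp_mem 1 x \<longrightarrow> lp_mem p (Tinf m a x)) \<and>
               bounded_op_l1_lp p (Tinf m a) \<and>
               continuous_op_l1_lp p (Tinf m a) \<and>
               pos_homogeneous_on_l1 (Tinf m a)) \<and>
            (SUP x\<in>{x. lp_mem 1 x \<and> lp_norm 1 x = 1}. lp_norm 2 (Tinf m a x))
               \<le> Cconst a)"
proof -
  note m = assms(1) and a = assms(2)
  have F: "(\<forall>x. lp_mem 1 x \<longrightarrow> lp_mem p (Finf m a x)) \<and> bounded_op_l1_lp p (Finf m a) \<and>
      continuous_op_l1_lp p (Finf m a)" if "real m - 1 < p" for p
    using that m abs_Finf_le[OF a m] weighted_continuous_at_Finf[OF a m]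
    by (intro l1_lp_operator_properties[OF a]) (auto simp: field_simps)
  have T: "(\<forall>x. lp_mem 1 x \<longrightarrow> lp_mem p (Tinf m a x)) \<and> bounded_op_l1_lp p (Tinf m a) \<and>
      continuous_op_l1_lp p (Tinf m a)" if "1 < p" for p
    using that abs_Tinf_le[OF a m] weighted_continuous_at_Tinf[OF a m]
    by (intro l1_lp_operator_properties[OF a]) auto
  have "(SUP x\<in>{x. lp_mem 1 x \<and> lp_norm 1 x = 1}. lp_norm (2 * (real m - 1)) (Finf m a x)) \<le> Kconst m a"
    by (rule SUP_l1_unit_sphere_le) (rule Finf_unit_norm_le_Kconst[OF a m])
  moreover have "(SUP x\<in>{x. lp_mem 1 x \<and> lp_norm 1 x = 1}. lp_norm 2 (Tinf m a x)) \<le> Cconst a"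
    by (rule SUP_l1_unit_sphere_le) (rule Tinf_unit_norm_le_Cconst[OF a m])
  ultimately show ?thesis
    using F T Finf_pos_homogeneous[OF m] Tinf_pos_homogeneous[OF m] by blast
qed

end
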